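(* Fix an integer $k\ge2$. Consider real variables $\{d_{u,i}\}_{i\in[k]}$ and $\{d_{v,i}\}_{i\in[k]}$ subject to the constraints (1) $0\le d_{w,i}\le1$ for all $w\in\{u,v\}$, $i\in[k]$, and (2) $\sum_{i\in[k]}d_{w,i}=k-1$ for each $w\in\{u,v\}$. Then for any fixed feasible values $\{d^*_{u,i}\}_{i\in[k]}$, $\{d^*_{v,i}\}_{i\in[k]}$, there exist vectors $a_u,a_v\in\mathbb{R}^k$ with $\|a_u\|_2\le\sqrt{k/2}$ and $\|a_v\|_2\le\sqrt{k/2}$ such that, over all feasible values of the variables, the expression $$\sum_{i\in[k]}a_{u,i}d_{u,i}+\sum_{i\in[k]}a_{v,i}d_{v,i}+\frac12\sum_{i\in[k]}|d_{u,i}-d_{v,i}|$$ attains its minimum value at $\{d^*_{u,i}\}$, $\{d^*_{v,i}\}$ (not necessarily uniquely). *)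

theory Defs
  imports "HOL-Analysis.Analysis"
begin

text \<open>Vectors in R^k are represented as functions nat => real, indexed by {..<k}
 (i.e. [k] = {0,...,k-1}); only values at indices < k matter.\<close>

definition feasible :: "nat \<Rightarrow> (nat \<Rightarrow> real) \<Rightarrow> bool" where
  "feasible k d \<longleftrightarrow> (\<forall>i<k. 0 \<le> d i \<and> d i \<le> 1) \<and> (\<Sum>i<k. d i) = real k - 1"

definition l2norm :: "nat \<Rightarrow> (nat \<Rightarrow> real) \<Rightarrow> real" where
  "l2norm k a = sqrt (\<Sum>i<k. (a i)\<^sup>2)"

definition objective :: "nat \<Rightarrow> (nat \<Rightarrow> real) \<Rightarrow> (nat \<Rightarrow> real) \<Rightarrow> (nat \<Rightarrow> real) \<Rightarrow> (nat \<Rightarrow> real) \<Rightarrow> real" where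
  "objective k au av du dv =
     (\<Sum>i<k. au i * du i) + (\<Sum>i<k. av i * dv i) + (1/2) * (\<Sum>i<k. \<bar>du i - dv i\<bar>)"

end

theory Submission
  imports Defs
begin

text \<open>Take \<open>a\<^sub>u = -\<sigma>/2\<close> and \<open>a\<^sub>v = \<sigma>/2\<close> with \<open>\<sigma>\<^sub>i = sgn (d\<^sup>*\<^sub>u\<^sub>,\<^sub>i - d\<^sup>*\<^sub>v\<^sub>,\<^sub>i)\<close>. The objective
  then becomes \<open>\<Sum>\<^sub>i (\<bar>x\<^sub>i\<bar> - \<sigma>\<^sub>i x\<^sub>i) / 2\<close> with \<open>x\<^sub>i = d\<^sub>u\<^sub>,\<^sub>i - d\<^sub>v\<^sub>,\<^sub>i\<close>, which is nonnegative
  because \<open>\<bar>\<sigma>\<^sub>i\<bar> \<le> 1\<close> and vanishes at \<open>d\<^sup>*\<close>. So \<open>d\<^sup>*\<close> is a global minimiser, even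
  without the feasibility constraints, and \<open>\<parallel>\<sigma>/2\<parallel>\<^sub>2\<^sup>2 \<le> k/4\<close>.\<close>

lemma l2norm_le_of_sq_le:
  assumes "\<And>i. i < k \<Longrightarrow> (a i)\<^sup>2 \<le> c"
  shows "l2norm k a \<le> sqrt (real k * c)"
proof -
  have "(\<Sum>i<k. (a i)\<^sup>2) \<le> (\<Sum>i<k. c)"
    using assms by (intro sum_mono) simp
  then show ?thesis
    unfolding l2norm_def by (simp add: real_sqrt_le_mono)
qed

lemma mult_le_abs_of_abs_le_one:
  fixes s x :: real
  assumes "\<bar>s\<bar> \<le> 1"
  shows "s * x \<le> \<bar>x\<bar>"
proof -
  have "\<bar>s * x\<bar> \<le> \<bar>x\<bar>"
    using assms by (simp add: abs_mult mult_left_le_one_le)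
  then show ?thesis by linarith
qed

lemma objective_opposite_weights:
  "objective k (\<lambda>i. - s i / 2) (\<lambda>i. s i / 2) du dv =
     (1/2) * (\<Sum>i<k. \<bar>du i - dv i\<bar> - s i * (du i - dv i))"
proof -
  have "objective k (\<lambda>i. - s i / 2) (\<lambda>i. s i / 2) du dv =
     (\<Sum>i<k. - s i / 2 * du i + s i / 2 * dv i + (1/2) * \<bar>du i - dv i\<bar>)"
    unfolding objective_def by (simp add: sum.distrib sum_distrib_left sum_subtractf sum_negf)
  also have "\<dots> = (\<Sum>i<k. (1/2) * (\<bar>du i - dv i\<bar> - s i * (du i - dv i)))"
    by (rule sum.cong) (auto simp: algebra_simps)
  finally show ?thesis by (simp add: sum_distrib_left)
qed

lemma objective_opposite_weights_nonneg:
  assumes "\<And>i. \<bar>s i\<bar> \<le> 1"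
  shows "0 \<le> objective k (\<lambda>i. - s i / 2) (\<lambda>i. s i / 2) du dv"
  unfolding objective_opposite_weights
  using mult_le_abs_of_abs_le_one[OF assms] by (simp add: sum_nonneg)

lemma objective_sgn_weights_eq_0:
  "objective k (\<lambda>i. - sgn (du i - dv i) / 2) (\<lambda>i. sgn (du i - dv i) / 2) du dv = 0"
  unfolding objective_opposite_weights by (simp add: abs_sgn)

theorem lemma4p4:
  fixes k :: nat and du' dv' :: "nat \<Rightarrow> real"
  assumes "k \<ge> 2"
    and "feasible k du'" and "feasible k dv'"
  shows "\<exists>au av :: nat \<Rightarrow> real.
           l2norm k au \<le> sqrt (real k / 2) \<and> l2norm k av \<le> sqrt (real k / 2) \<and>
           (\<forall>du dv. feasible k du \<longrightarrow> feasible k dv \<longrightarrow>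
              objective k au av du' dv' \<le> objective k au av du dv)"
proof -
  define s where "s i = sgn (du' i - dv' i)" for i
  have s_bounded: "\<bar>s i\<bar> \<le> 1" for i
    unfolding s_def by (simp add: sgn_real_def)
  have "(s i / 2)\<^sup>2 \<le> 1/2" and "(- s i / 2)\<^sup>2 \<le> 1/2" for i
    using s_bounded[of i] abs_square_le_1[of "s i"] by (simp_all add: power_divide)
  then have "l2norm k (\<lambda>i. - s i / 2) \<le> sqrt (real k / 2)"
    and "l2norm k (\<lambda>i. s i / 2) \<le> sqrt (real k / 2)"
    using l2norm_le_of_sq_le[of k "\<lambda>i. - s i / 2" "1/2"]
      l2norm_le_of_sq_le[of k "\<lambda>i. s i / 2" "1/2"] by simp_all
  moreover have "objective k (\<lambda>i. - s i / 2) (\<lambda>i. s i / 2) du' dv'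
      \<le> objective k (\<lambda>i. - s i / 2) (\<lambda>i. s i / 2) du dv" for du dv
    using objective_opposite_weights_nonneg[OF s_bounded, where k = k and du = du and dv = dv]
    unfolding s_def objective_sgn_weights_eq_0 .
  ultimately show ?thesis by blast
qed

end
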